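(* Let $K$ be a $15$-vertex $\mathbb{F}_2$-homology $8$-manifold that satisfies complementarity. Then $K$ has exactly $490$ eight-dimensional simplices.
   Context: A finite simplicial complex $K$ on vertex set $V$ is an $\mathbb{F}_2$-homology $d$-manifold if every simplex lies in a $d$-simplex and for every nonempty simplex $\sigma$ with $\dim\sigma<d$, $H_*(\mathrm{link}(\sigma,K);\mathbb{F}_2)\cong H_*(S^{d-\dim\sigma-1};\mathbb{F}_2)$, where $\mathrm{link}(\sigma,K)=\{\tau\in K:\tau\cap\sigma=\varnothing,\ \tau\cup\sigma\in K\}$. $K$ satisfies complementarity if for every $\sigma\subseteq V$ exactly one of $\sigma$, $V\setminus\sigma$ is a simplex of $K$. *)

theory Defs
  imports Main HOL.Vector_Spaces "HOL-Library.Z2" "HOL-Library.Function_Algebras"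
begin

text \<open>Simplicial chains with F2 coefficients are
  functions from vertex sets to bit supported on the faces of the given dimension.\<close>

definition simplicial_complex_on :: "'a set \<Rightarrow> 'a set set \<Rightarrow> bool" where
  "simplicial_complex_on V K \<longleftrightarrow> finite V \<and> K \<subseteq> Pow V \<and> K \<noteq> {} \<and>
     (\<forall>s\<in>K. \<forall>t. t \<subseteq> s \<longrightarrow> t \<in> K)"

definition faces :: "'a set set \<Rightarrow> nat \<Rightarrow> 'a set set" where
  "faces K i = {s \<in> K. card s = i + 1}"

definition link :: "'a set \<Rightarrow> 'a set set \<Rightarrow> 'a set set" where
  "link \<sigma> K = {\<tau> \<in> K. \<tau> \<inter> \<sigma> = {} \<and> \<tau> \<union> \<sigma> \<in> K}"

definition scaleF :: "bit \<Rightarrow> ('a set \<Rightarrow> bit) \<Rightarrow> ('a set \<Rightarrow> bit)" where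
  "scaleF c f = (\<lambda>x. c * f x)"

definition chains :: "'a set set \<Rightarrow> nat \<Rightarrow> ('a set \<Rightarrow> bit) set" where
  "chains K i = {c. \<forall>s. c s \<noteq> 0 \<longrightarrow> s \<in> faces K i}"

text \<open>simplicial boundary map C_i \<rightarrow> C_(i-1) over F2 (signs are irrelevant);
  the boundary of 0-chains is 0 (unreduced homology)\<close>
fun bd :: "'a set set \<Rightarrow> nat \<Rightarrow> ('a set \<Rightarrow> bit) \<Rightarrow> ('a set \<Rightarrow> bit)" where
  "bd K 0 c = 0"
| "bd K (Suc i) c = (\<lambda>t. if t \<in> faces K i
       then (\<Sum>s\<in>{s \<in> faces K (Suc i). t \<subseteq> s}. c s) else 0)"

definition cycles :: "'a set set \<Rightarrow> nat \<Rightarrow> ('a set \<Rightarrow> bit) set" where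
  "cycles K i = {c \<in> chains K i. bd K i c = 0}"

definition boundaries :: "'a set set \<Rightarrow> nat \<Rightarrow> ('a set \<Rightarrow> bit) set" where
  "boundaries K i = bd K (Suc i) ` chains K (Suc i)"

definition betti :: "'a set set \<Rightarrow> nat \<Rightarrow> nat" where
  "betti K i = vector_space.dim scaleF (cycles K i) - vector_space.dim scaleF (boundaries K i)"

text \<open>the standard triangulation of S^k: boundary of the (k+1)-simplex on {0..k+1}\<close>
definition sphere_complex :: "nat \<Rightarrow> nat set set" where
  "sphere_complex k = {s. s \<subseteq> {0..k+1} \<and> s \<noteq> {0..k+1}}"

text \<open>H_*(L;F2) \<cong> H_*(S^k;F2): finite-dimensional F2-vector spaces are isomorphic iff
  their dimensions agree\<close>
definition F2_homology_sphere :: "'a set set \<Rightarrow> nat \<Rightarrow> bool" where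
  "F2_homology_sphere L k \<longleftrightarrow> (\<forall>i. betti L i = betti (sphere_complex k) i)"

definition F2_homology_manifold :: "nat \<Rightarrow> 'a set set \<Rightarrow> bool" where
  "F2_homology_manifold d K \<longleftrightarrow>
     (\<forall>\<sigma>\<in>K. \<exists>\<tau>\<in>K. \<sigma> \<subseteq> \<tau> \<and> card \<tau> = d + 1) \<and>
     (\<forall>\<sigma>\<in>K. \<sigma> \<noteq> {} \<and> card \<sigma> - 1 < d \<longrightarrow>
        F2_homology_sphere (link \<sigma> K) (d - (card \<sigma> - 1) - 1))"

definition complementarity :: "'a set \<Rightarrow> 'a set set \<Rightarrow> bool" where
  "complementarity V K \<longleftrightarrow> (\<forall>\<sigma>. \<sigma> \<subseteq> V \<longrightarrow> (\<sigma> \<in> K \<longleftrightarrow> V - \<sigma> \<notin> K))"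

end

theory Submission
  imports Defs "HOL-Library.Indicator_Function"
begin

text \<open>Write f_i = card (faces K i).  Complementarity makes exactly one of each 6-subset of the
  15 vertices and its complementary 9-subset a face, so f_5 + f_8 = C(15,6); likewise
  f_6 + f_7 = C(15,7).  The link of a j-face is an F2-homology (7 - j)-sphere, so by the
  Euler-Poincare formula its Euler characteristic is 1 + (-1)^(7 - j).  Since the i-faces of the
  link correspond to the (i + j + 1)-faces of K containing the j-face, summing over all j-faces
  gives a linear relation among the f_i: for j = 7 it reads 9 f_8 = 2 f_7 (every 7-face lies in
  exactly two facets), for j = 5 it reads 7 f_6 - 28 f_7 + 84 f_8 = 2 f_5.  The four equations
  force f_8 = 490.\<close>

section \<open>Rank--nullity on finite-dimensional subspaces\<close>

context vector_space begin

lemma span_Int_span_eq_zero: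
  assumes "independent (A \<union> C)" "A \<inter> C = {}" "finite A" "finite C"
    and "x \<in> span A" "x \<in> span C"
  shows "x = 0"
proof -
  obtain u where u: "x = (\<Sum>v\<in>A. u v *s v)" using assms(3,5) span_finite by auto
  obtain w where w: "x = (\<Sum>v\<in>C. w v *s v)" using assms(4,6) span_finite by auto
  define r where "r v = (if v \<in> A then u v else - w v)" for v
  have "(\<Sum>v\<in>A \<union> C. r v *s v) = (\<Sum>v\<in>A. r v *s v) + (\<Sum>v\<in>C. r v *s v)"
    using assms(2-4) by (simp add: sum.union_disjoint)
  also have "\<dots> = x + (\<Sum>v\<in>C. - (w v *s v))"
    using u assms(2) by (auto simp: r_def intro!: sum.cong)
  also have "\<dots> = 0" using w by (simp add: sum_negf)
  finally have "\<forall>v\<in>A. r v = 0"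
    using independentD[OF assms(1)] assms(3,4) by blast
  then show ?thesis using u by (simp add: r_def)
qed

text \<open>The chain space is infinite-dimensional, so the rank--nullity theorem of
  finite_dimensional_vector_space does not apply; only S is assumed finite-dimensional.\<close>

lemma rank_nullity_subspace:
  assumes f: "Vector_Spaces.linear scale scale f" and S: "subspace S"
    and fin: "S \<subseteq> span W" "finite W"
  shows "dim S = dim {x\<in>S. f x = 0} + dim (f ` S)"
proof -
  interpret f: Vector_Spaces.linear scale scale f by (fact f)
  let ?N = "{x\<in>S. f x = 0}"
  obtain A where A: "A \<subseteq> ?N" "independent A" "?N \<subseteq> span A" "card A = dim ?N"
    using basis_exists by blast
  have "A \<subseteq> S" using A by auto
  then obtain B where B: "A \<subseteq> B" "B \<subseteq> S" "independent B" "S \<subseteq> span B"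
    using maximal_independent_subset_extend A(2) by metis
  have "finite B" using independent_span_bound[OF fin(2) B(3)] B(2) fin(1) by blast
  define C where "C = B - A"
  have BAC: "B = A \<union> C" "A \<inter> C = {}" and finAC: "finite A" "finite C"
    using B(1) \<open>finite B\<close> by (auto simp: C_def intro: finite_subset)
  have "span C \<subseteq> S" using B(2) S BAC by (metis Un_upper2 span_minimal subset_trans)
  then have "x = 0" if "x \<in> span C" "f x = 0" for x
    using that A(3) B(3) BAC finAC span_Int_span_eq_zero[of A C x] by blast
  then have inj: "inj_on f (span C)"
    using f.inj_on_iff_eq_0[OF subspace_span] by blast
  have "f ` S \<subseteq> span (f ` C)"
  proof
    fix y assume "y \<in> f ` S"
    then obtain x where "x \<in> S" "y = f x" by auto
    then have "y \<in> span (f ` B)" using B(4) f.span_image by auto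
    moreover have "span (f ` B) \<subseteq> span (f ` C)"
      using BAC A(1) span_base span_zero by (intro span_minimal subspace_span) auto
    ultimately show "y \<in> span (f ` C)" by auto
  qed
  moreover have "independent C" using B(3) BAC independent_mono by blast
  then have "independent (f ` C)" using f.independent_injective_image[OF _ inj] by blast
  moreover have "f ` C \<subseteq> f ` S" using BAC B(2) by auto
  ultimately have "dim (f ` S) = card (f ` C)" using basis_card_eq_dim by simp
  also have "\<dots> = card C" using inj span_base by (metis card_image inj_on_subset subsetI)
  finally have "dim (f ` S) = card C" .
  moreover have "dim S = card A + card C"
    using basis_card_eq_dim[OF B(2,4,3)] BAC finAC card_Un_disjoint by metis
  ultimately show ?thesis using A(4) by simp
qed

end

section \<open>Simplicial chains over F2\<close>

lemma vector_space_scaleF: "vector_space (scaleF :: bit \<Rightarrow> ('a set \<Rightarrow> bit) \<Rightarrow> 'a set \<Rightarrow> bit)"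
  by unfold_locales (auto simp: scaleF_def fun_eq_iff algebra_simps)

interpretation F2: vector_space "scaleF :: bit \<Rightarrow> ('a set \<Rightarrow> bit) \<Rightarrow> 'a set \<Rightarrow> bit"
  by (rule vector_space_scaleF)

lemma sum_apply: "(\<Sum>x\<in>A. f x) y = (\<Sum>x\<in>A. f x y)"
  by (induction A rule: infinite_finite_induct) auto

lemma linear_bd: "Vector_Spaces.linear scaleF scaleF (bd L i)"
proof (cases i)
  case 0
  then show ?thesis by (simp add: Vector_Spaces.linear_iff vector_space_scaleF scaleF_def fun_eq_iff)
next
  case (Suc j)
  then show ?thesis
    unfolding Vector_Spaces.linear_iff
    by (simp add: vector_space_scaleF scaleF_def fun_eq_iff sum.distrib sum_distrib_left
        del: add_bit_eq_xor mult_bit_eq_and)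
qed

lemma subspace_chains: "F2.subspace (chains L i)"
  by (auto simp: F2.subspace_def chains_def scaleF_def)

lemma finite_faces: "finite L \<Longrightarrow> finite (faces L i)"
  by (simp add: faces_def)

lemma chain_eq_sum_indicators:
  assumes "finite L" "c \<in> chains L i"
  shows "c = (\<Sum>s\<in>faces L i. scaleF (c s) (indicator {s}))"
proof
  fix t
  have "(\<Sum>s\<in>faces L i. scaleF (c s) (indicator {s})) t = (\<Sum>s\<in>faces L i. if s = t then c t else 0)"
    unfolding sum_apply by (intro sum.cong) (auto simp: scaleF_def indicator_def)
  also have "\<dots> = c t" using assms by (auto simp: chains_def finite_faces)
  finally show "c t = (\<Sum>s\<in>faces L i. scaleF (c s) (indicator {s})) t" by simp
qed

lemma chains_subset_span_indicators:
  assumes "finite L"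
  shows "chains L i \<subseteq> F2.span ((\<lambda>s. indicator {s}) ` faces L i)"
proof
  fix c assume "c \<in> chains L i"
  then have "c = (\<Sum>s\<in>faces L i. scaleF (c s) (indicator {s}))"
    by (rule chain_eq_sum_indicators[OF assms])
  also have "\<dots> \<in> F2.span ((\<lambda>s. indicator {s}) ` faces L i)"
    by (intro F2.span_sum F2.span_scale F2.span_base) auto
  finally show "c \<in> F2.span ((\<lambda>s. indicator {s}) ` faces L i)" .
qed

lemma independent_indicators:
  fixes F :: "'a set set"
  shows "F2.independent ((\<lambda>s. indicator {s} :: 'a set \<Rightarrow> bit) ` F)"
  unfolding F2.independent_explicit_module
proof (intro allI impI)
  fix T u v
  assume T: "finite T" "T \<subseteq> (\<lambda>s. indicator {s}) ` F" "(\<Sum>w\<in>T. scaleF (u w) w) = 0" "v \<in> T"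
  then obtain s where s: "v = indicator {s}" by auto
  have point: "w s = (if w = v then 1 else 0)" if w: "w \<in> T" for w
  proof -
    obtain s' where "w = indicator {s'}" using w T(2) by auto
    then show ?thesis using s by (auto simp: fun_eq_iff indicator_def)
  qed
  have "0 = (\<Sum>w\<in>T. scaleF (u w) w) s" using T(3) by simp
  also have "\<dots> = (\<Sum>w\<in>T. if w = v then u v else 0)"
    unfolding sum_apply by (intro sum.cong) (auto simp: scaleF_def point)
  also have "\<dots> = u v" using T(1,4) by simp
  finally show "u v = 0" by simp
qed

lemma dim_chains:
  assumes "finite L"
  shows "F2.dim (chains L i) = card (faces L i)"
proof (rule F2.dim_unique)
  show "(\<lambda>s. indicator {s}) ` faces L i \<subseteq> chains L i"
    by (auto simp: chains_def indicator_def)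
  show "card ((\<lambda>s. indicator {s} :: 'a set \<Rightarrow> bit) ` faces L i) = card (faces L i)"
    by (rule card_image) (auto simp: inj_on_def fun_eq_iff split: split_indicator_asm)
qed (use assms chains_subset_span_indicators independent_indicators in auto)

lemma dim_zero_subspace: "F2.dim {0} = 0"
  using F2.dim_unique[of "{}" "{0}" 0] F2.independent_empty by auto

definition finite_complex :: "'a set set \<Rightarrow> bool" where
  "finite_complex L \<longleftrightarrow> finite L \<and> (\<forall>s\<in>L. \<forall>t. t \<subseteq> s \<longrightarrow> t \<in> L)"

lemma simplicial_complex_on_imp_finite_complex:
  "simplicial_complex_on V K \<Longrightarrow> finite_complex K"
  unfolding simplicial_complex_on_def finite_complex_def
  by (meson finite_Pow_iff finite_subset)

lemma card_faces_between:
  assumes L: "finite_complex L" and u: "u \<in> faces L j" and s: "s \<in> faces L (Suc (Suc j))" "u \<subseteq> s"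
  shows "card {t \<in> faces L (Suc j). u \<subseteq> t \<and> t \<subseteq> s} = 2"
proof -
  have u': "finite u" "card u = j + 1" using u by (auto simp: faces_def intro: card_ge_0_finite)
  have s': "finite s" "card s = j + 3" using s by (auto simp: faces_def intro: card_ge_0_finite)
  have "{t \<in> faces L (Suc j). u \<subseteq> t \<and> t \<subseteq> s} = (\<lambda>x. insert x u) ` (s - u)"
  proof (intro equalityI subsetI)
    fix t assume "t \<in> {t \<in> faces L (Suc j). u \<subseteq> t \<and> t \<subseteq> s}"
    then have "card t = j + 2" "u \<subseteq> t" "t \<subseteq> s" by (auto simp: faces_def)
    moreover have "finite t" using \<open>t \<subseteq> s\<close> s' finite_subset by blast
    ultimately have "card (t - u) = 1" using u' by (simp add: card_Diff_subset)
    then obtain x where "t - u = {x}" using card_1_singletonE by blast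
    then show "t \<in> (\<lambda>x. insert x u) ` (s - u)" using \<open>u \<subseteq> t\<close> \<open>t \<subseteq> s\<close> by auto
  next
    fix t assume "t \<in> (\<lambda>x. insert x u) ` (s - u)"
    then obtain x where x: "x \<in> s - u" "t = insert x u" by auto
    then have "t \<in> L" using L s \<open>u \<subseteq> s\<close> by (auto simp: finite_complex_def faces_def)
    then show "t \<in> {t \<in> faces L (Suc j). u \<subseteq> t \<and> t \<subseteq> s}"
      using x u' \<open>u \<subseteq> s\<close> by (auto simp: faces_def)
  qed
  moreover have "card ((\<lambda>x. insert x u) ` (s - u)) = card (s - u)"
    by (rule card_image) (auto simp: inj_on_def)
  ultimately show ?thesis using s' u' \<open>u \<subseteq> s\<close> by (simp add: card_Diff_subset)
qed

lemma bd_bd: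
  assumes L: "finite_complex L"
  shows "bd L i (bd L (Suc i) c) = 0"
proof (cases i)
  case (Suc j)
  have "bd L (Suc j) (bd L (Suc (Suc j)) c) u = 0" if u: "u \<in> faces L j" for u
  proof -
    let ?T = "{t \<in> faces L (Suc j). u \<subseteq> t}"
    let ?F = "faces L (Suc (Suc j))"
    have fin: "finite ?T" "finite ?F" using L by (auto simp: finite_complex_def finite_faces)
    have "bd L (Suc j) (bd L (Suc (Suc j)) c) u = (\<Sum>t\<in>?T. \<Sum>s\<in>{s \<in> ?F. t \<subseteq> s}. c s)"
      using u by simp
    also have "\<dots> = (\<Sum>s\<in>?F. \<Sum>t\<in>{t \<in> ?T. t \<subseteq> s}. c s)"
      by (rule sum.swap_restrict[OF fin])
    also have "\<dots> = (\<Sum>s\<in>?F. of_nat (card {t \<in> ?T. t \<subseteq> s}) * c s)"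
      by simp
    also have "\<dots> = 0"
    proof (intro sum.neutral ballI)
      fix s assume s: "s \<in> ?F"
      show "of_nat (card {t \<in> ?T. t \<subseteq> s}) * c s = 0"
      proof (cases "u \<subseteq> s")
        case True
        moreover have "{t \<in> ?T. t \<subseteq> s} = {t \<in> faces L (Suc j). u \<subseteq> t \<and> t \<subseteq> s}"
          by auto
        ultimately have "card {t \<in> ?T. t \<subseteq> s} = 2"
          using card_faces_between[OF L u s] by simp
        then show ?thesis by simp
      next
        case False
        then have "{t \<in> ?T. t \<subseteq> s} = {}" by blast
        then show ?thesis by (simp only: card.empty of_nat_0 mult_zero_left)
      qed
    qed
    finally show ?thesis .
  qed
  then show ?thesis using Suc by (auto simp: fun_eq_iff)
qed (simp add: fun_eq_iff)

lemma bd_in_chains: "bd L (Suc i) c \<in> chains L i"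
  by (auto simp: chains_def)

lemma boundaries_subset_cycles:
  "finite_complex L \<Longrightarrow> boundaries L i \<subseteq> cycles L i"
  by (auto simp: boundaries_def cycles_def bd_in_chains bd_bd simp del: bd.simps)

lemma card_faces_eq_dim_cycles_plus_rank:
  assumes "finite L"
  shows "card (faces L i) = F2.dim (cycles L i) + F2.dim (bd L i ` chains L i)"
  using F2.rank_nullity_subspace[OF linear_bd subspace_chains chains_subset_span_indicators[OF assms]]
    assms by (simp add: dim_chains cycles_def finite_faces)

lemma dim_boundaries_le_dim_cycles:
  assumes L: "finite_complex L"
  shows "F2.dim (boundaries L i) \<le> F2.dim (cycles L i)"
proof -
  have fin: "finite L" using L by (simp add: finite_complex_def)
  obtain W where W: "W \<subseteq> cycles L i" "F2.independent W" "cycles L i \<subseteq> F2.span W"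
      "card W = F2.dim (cycles L i)"
    using F2.basis_exists by blast
  have "W \<subseteq> F2.span ((\<lambda>s. indicator {s}) ` faces L i)"
    using W(1) chains_subset_span_indicators[OF fin] by (auto simp: cycles_def)
  then have "finite W" using F2.independent_span_bound[OF _ W(2)] fin finite_faces by blast
  moreover have "boundaries L i \<subseteq> F2.span W" using boundaries_subset_cycles[OF L] W(3) by auto
  ultimately show ?thesis using F2.dim_le_card W(4) by metis
qed

section \<open>The Euler-Poincare formula\<close>

lemma euler_poincare:
  assumes L: "finite_complex L" and top: "faces L (Suc n) = {}"
  shows "(\<Sum>i\<le>n. (-1)^i * int (betti L i)) = (\<Sum>i\<le>n. (-1)^i * int (card (faces L i)))"
proof -
  have fin: "finite L" using L by (simp add: finite_complex_def)
  define z where "z i = int (F2.dim (cycles L i))" for i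
  \<comment> \<open>r i is the rank of the boundary map out of degree i, so B_i has dimension r (Suc i);
    r 0 = 0 because homology is unreduced.\<close>
  define r where "r i = int (F2.dim (bd L i ` chains L i))" for i
  have faces: "int (card (faces L i)) = z i + r i" for i
    using card_faces_eq_dim_cycles_plus_rank[OF fin] by (simp add: z_def r_def)
  have betti: "int (betti L i) = z i - r (Suc i)" for i
    using dim_boundaries_le_dim_cycles[OF L, of i]
    by (simp add: betti_def boundaries_def z_def r_def of_nat_diff)
  have "bd L 0 ` chains L 0 = {0}" by (auto simp: chains_def)
  then have r0: "r 0 = 0" by (simp add: r_def dim_zero_subspace)
  have "chains L (Suc n) = {0}" using top by (auto simp: chains_def)
  then have "bd L (Suc n) ` chains L (Suc n) = {0}" by (auto simp: fun_eq_iff)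
  then have rn: "r (Suc n) = 0" by (simp add: r_def dim_zero_subspace)
  have "(\<Sum>i\<le>n. (-1)^i * int (card (faces L i))) - (\<Sum>i\<le>n. (-1)^i * int (betti L i))
      = (\<Sum>i\<le>n. (-1)^i * r i - (-1)^Suc i * r (Suc i))"
    by (simp add: faces betti sum_subtractf[symmetric] algebra_simps)
  also have "\<dots> = 0"
    using sum_telescope[of "\<lambda>i. (-1)^i * r i" n] r0 rn by simp
  finally show ?thesis by simp
qed

lemma finite_complex_sphere_complex: "finite_complex (sphere_complex k)"
  unfolding finite_complex_def sphere_complex_def
  by (auto intro: finite_subset[of _ "Pow {0..k+1}"])

lemma card_faces_sphere_complex:
  assumes "i \<le> k"
  shows "card (faces (sphere_complex k) i) = (k + 2) choose (i + 1)"
proof -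
  have "faces (sphere_complex k) i = {s. s \<subseteq> {0..k+1} \<and> card s = i + 1}"
    using assms by (auto simp: faces_def sphere_complex_def)
  then show ?thesis using n_subsets[of "{0..k+1}" "i+1"] by simp
qed

lemma faces_sphere_complex_top: "faces (sphere_complex k) (Suc k) = {}"
proof -
  have "s = {0..k+1}" if "s \<subseteq> {0..k+1}" "card s = k + 2" for s
    using that by (intro card_subset_eq) auto
  then show ?thesis by (auto simp: faces_def sphere_complex_def)
qed

lemma euler_char_sphere_complex:
  "(\<Sum>i\<le>k. (-1)^i * int (betti (sphere_complex k) i)) = 1 + (-1)^k"
proof -
  have "(\<Sum>i\<le>k. (-1)^i * int (betti (sphere_complex k) i))
      = (\<Sum>i\<le>k. (-1)^i * int ((k + 2) choose (i + 1)))"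
    using euler_poincare[OF finite_complex_sphere_complex faces_sphere_complex_top]
    by (simp add: card_faces_sphere_complex)
  moreover have "(\<Sum>i\<le>k + 2. (-1)^i * int ((k + 2) choose i))
      = 1 - (\<Sum>i\<le>k. (-1)^i * int ((k + 2) choose (i + 1))) + (-1)^k"
    by (simp only: add_2_eq_Suc' sum.atMost_Suc[where n = "Suc k"] sum.atMost_Suc_shift[where n = k])
      (simp add: sum_negf del: binomial_Suc_Suc)
  moreover have "(\<Sum>i\<le>k + 2. (-1)^i * int ((k + 2) choose i)) = 0"
    by (rule choose_alternating_sum) simp
  ultimately show ?thesis by simp
qed

section \<open>Face numbers of homology manifolds\<close>

lemma finite_complex_link:
  assumes "finite_complex K"
  shows "finite_complex (link \<sigma> K)"
  unfolding finite_complex_def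
proof (intro conjI ballI allI impI)
  show "finite (link \<sigma> K)" using assms by (simp add: finite_complex_def link_def)
next
  fix s t assume s: "s \<in> link \<sigma> K" and "t \<subseteq> s"
  have closed: "\<And>s t. s \<in> K \<Longrightarrow> t \<subseteq> s \<Longrightarrow> t \<in> K"
    using assms by (simp add: finite_complex_def)
  have "t \<in> K" "t \<union> \<sigma> \<in> K" "t \<inter> \<sigma> = {}"
    using s \<open>t \<subseteq> s\<close> closed[of s t] closed[of "s \<union> \<sigma>" "t \<union> \<sigma>"] by (auto simp: link_def)
  then show "t \<in> link \<sigma> K" by (simp add: link_def)
qed

lemma card_faces_link:
  assumes K: "finite_complex K" and "finite \<sigma>"
  shows "card (faces (link \<sigma> K) i) = card {\<rho> \<in> faces K (i + card \<sigma>). \<sigma> \<subseteq> \<rho>}"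
proof (rule bij_betw_same_card[of "\<lambda>\<tau>. \<tau> \<union> \<sigma>"], rule bij_betw_byWitness[of _ "\<lambda>\<rho>. \<rho> - \<sigma>"])
  show "(\<lambda>\<tau>. \<tau> \<union> \<sigma>) ` faces (link \<sigma> K) i \<subseteq> {\<rho> \<in> faces K (i + card \<sigma>). \<sigma> \<subseteq> \<rho>}"
  proof (rule image_subsetI)
    fix \<tau> assume "\<tau> \<in> faces (link \<sigma> K) i"
    then have \<tau>: "\<tau> \<inter> \<sigma> = {}" "\<tau> \<union> \<sigma> \<in> K" "card \<tau> = i + 1"
      by (auto simp: faces_def link_def)
    then have "finite \<tau>" by (intro card_ge_0_finite) simp
    then show "\<tau> \<union> \<sigma> \<in> {\<rho> \<in> faces K (i + card \<sigma>). \<sigma> \<subseteq> \<rho>}"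
      using \<tau> \<open>finite \<sigma>\<close> by (simp add: faces_def card_Un_disjoint)
  qed
  show "(\<lambda>\<rho>. \<rho> - \<sigma>) ` {\<rho> \<in> faces K (i + card \<sigma>). \<sigma> \<subseteq> \<rho>} \<subseteq> faces (link \<sigma> K) i"
  proof (rule image_subsetI)
    fix \<rho> assume "\<rho> \<in> {\<rho> \<in> faces K (i + card \<sigma>). \<sigma> \<subseteq> \<rho>}"
    then have \<rho>: "\<rho> \<in> K" "card \<rho> = i + card \<sigma> + 1" "\<sigma> \<subseteq> \<rho>" by (auto simp: faces_def)
    then have "\<rho> - \<sigma> \<in> K" using K by (auto simp: finite_complex_def)
    moreover have "\<rho> - \<sigma> \<union> \<sigma> = \<rho>" using \<rho> by blast
    ultimately show "\<rho> - \<sigma> \<in> faces (link \<sigma> K) i"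
      using \<rho> \<open>finite \<sigma>\<close> by (auto simp: faces_def link_def card_Diff_subset)
  qed
qed (auto simp: faces_def link_def)

lemma faces_empty_above_dim:
  assumes "F2_homology_manifold d K" "finite_complex K" "d < m"
  shows "faces K m = {}"
proof -
  have "card s \<le> d + 1" if "s \<in> K" for s
  proof -
    obtain t where "t \<in> K" "s \<subseteq> t" "card t = d + 1"
      using assms(1) \<open>s \<in> K\<close> by (auto simp: F2_homology_manifold_def)
    moreover have "finite t" using \<open>card t = d + 1\<close> card_ge_0_finite by force
    ultimately show ?thesis using card_mono by metis
  qed
  then show ?thesis using assms(3) by (fastforce simp: faces_def)
qed

lemma manifold_link_euler_char:
  assumes K: "finite_complex K" and M: "F2_homology_manifold d K"
    and \<sigma>: "\<sigma> \<in> faces K j" and "j < d"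
  shows "(\<Sum>i\<le>d - j - 1. (-1)^i * int (card {\<rho> \<in> faces K (i + j + 1). \<sigma> \<subseteq> \<rho>}))
       = 1 + (-1)^(d - j - 1)"
proof -
  let ?k = "d - j - 1"
  have card: "card \<sigma> = j + 1" and fin: "finite \<sigma>"
    using \<sigma> by (auto simp: faces_def intro: card_ge_0_finite)
  have "F2_homology_sphere (link \<sigma> K) ?k"
    using M \<sigma> \<open>j < d\<close> card by (auto simp: F2_homology_manifold_def faces_def)
  then have "(\<Sum>i\<le>?k. (-1)^i * int (betti (link \<sigma> K) i)) = 1 + (-1)^?k"
    using euler_char_sphere_complex by (simp add: F2_homology_sphere_def)
  moreover have "faces K (d + 1) = {}"
    using faces_empty_above_dim[OF M K] by simp
  then have "card (faces (link \<sigma> K) (Suc ?k)) = 0"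
    using card_faces_link[OF K fin] card \<open>j < d\<close> by simp
  then have "faces (link \<sigma> K) (Suc ?k) = {}"
    using finite_complex_link[OF K] by (simp add: finite_complex_def finite_faces)
  ultimately show ?thesis
    using euler_poincare[OF finite_complex_link[OF K]] card_faces_link[OF K fin] card
    by (simp add: add.assoc)
qed

lemma sum_card_incidences:
  assumes K: "finite_complex K"
  shows "(\<Sum>\<sigma>\<in>faces K j. card {\<rho> \<in> faces K m. \<sigma> \<subseteq> \<rho>})
       = card (faces K m) * ((m + 1) choose (j + 1))"
proof -
  have fin: "finite (faces K j)" "finite (faces K m)"
    using K by (auto simp: finite_complex_def finite_faces)
  have "(\<Sum>\<sigma>\<in>faces K j. card {\<rho> \<in> faces K m. \<sigma> \<subseteq> \<rho>})
      = (\<Sum>\<rho>\<in>faces K m. card {\<sigma> \<in> faces K j. \<sigma> \<subseteq> \<rho>})"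
    using sum.swap_restrict[OF fin, of "\<lambda>_ _. 1::nat" "\<lambda>\<sigma> \<rho>. \<sigma> \<subseteq> \<rho>"] by simp
  also have "\<dots> = (\<Sum>\<rho>\<in>faces K m. (m + 1) choose (j + 1))"
  proof (rule sum.cong)
    fix \<rho> assume \<rho>: "\<rho> \<in> faces K m"
    then have "finite \<rho>" "card \<rho> = m + 1" by (auto simp: faces_def intro: card_ge_0_finite)
    moreover have "{\<sigma> \<in> faces K j. \<sigma> \<subseteq> \<rho>} = {\<sigma>. \<sigma> \<subseteq> \<rho> \<and> card \<sigma> = j + 1}"
      using K \<rho> by (auto simp: faces_def finite_complex_def)
    ultimately show "card {\<sigma> \<in> faces K j. \<sigma> \<subseteq> \<rho>} = (m + 1) choose (j + 1)"
      by (simp add: n_subsets)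
  qed simp
  finally show ?thesis by simp
qed

lemma manifold_face_number_relation:
  assumes K: "finite_complex K" and M: "F2_homology_manifold d K" and "j < d"
  shows "(\<Sum>i\<le>d - j - 1. (-1)^i * int ((i + j + 2) choose (j + 1)) * int (card (faces K (i + j + 1))))
       = (1 + (-1)^(d - j - 1)) * int (card (faces K j))"
proof -
  have "int ((i + j + 2) choose (j + 1)) * int (card (faces K (i + j + 1)))
      = (\<Sum>\<sigma>\<in>faces K j. int (card {\<rho> \<in> faces K (i + j + 1). \<sigma> \<subseteq> \<rho>}))" for i
    using sum_card_incidences[OF K, where j = j and m = "i + j + 1"]
    by (simp only: of_nat_mult [symmetric] of_nat_sum [symmetric] mult.commute add.assoc
        one_add_one)
  then have "(\<Sum>i\<le>d - j - 1. (-1)^i * int ((i + j + 2) choose (j + 1)) * int (card (faces K (i + j + 1))))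
      = (\<Sum>i\<le>d - j - 1. \<Sum>\<sigma>\<in>faces K j. (-1)^i * int (card {\<rho> \<in> faces K (i + j + 1). \<sigma> \<subseteq> \<rho>}))"
    by (simp add: sum_distrib_left mult.assoc)
  also have "\<dots> = (\<Sum>\<sigma>\<in>faces K j. 1 + (-1)^(d - j - 1))"
    using manifold_link_euler_char[OF K M _ \<open>j < d\<close>] by (subst sum.swap) simp
  finally show ?thesis by simp
qed

lemma card_faces_complementary:
  assumes SC: "simplicial_complex_on V K" and C: "complementarity V K" and jl: "j + l + 2 = card V"
  shows "card (faces K j) + card (faces K l) = card V choose (j + 1)"
proof -
  have fV: "finite V" and KV: "K \<subseteq> Pow V" using SC by (auto simp: simplicial_complex_on_def)
  let ?N = "{s. s \<subseteq> V \<and> card s = j + 1 \<and> s \<notin> K}"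
  have card_compl: "card (V - s) = card V - card s" if "s \<subseteq> V" for s
    using that fV by (simp add: card_Diff_subset finite_subset)
  have compl: "s \<in> K \<longleftrightarrow> V - s \<notin> K" if "s \<subseteq> V" for s
    using C that unfolding complementarity_def by blast
  have "bij_betw (\<lambda>s. V - s) ?N (faces K l)"
  proof (rule bij_betw_byWitness[of _ "\<lambda>s. V - s"])
    show "(\<lambda>s. V - s) ` ?N \<subseteq> faces K l"
    proof (rule image_subsetI)
      fix s assume s: "s \<in> ?N"
      then have "V - s \<in> K" using compl[of s] by simp
      moreover have "card (V - s) = l + 1" using s card_compl[of s] jl by simp
      ultimately show "V - s \<in> faces K l" by (simp add: faces_def)
    qed
    show "(\<lambda>s. V - s) ` faces K l \<subseteq> ?N"
    proof (rule image_subsetI)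
      fix s assume s: "s \<in> faces K l"
      then have "s \<subseteq> V" "s \<in> K" "card s = l + 1" using KV by (auto simp: faces_def)
      moreover have "V - (V - s) = s" using \<open>s \<subseteq> V\<close> by blast
      ultimately have "V - s \<notin> K" using compl[of "V - s"] by simp
      moreover have "card (V - s) = j + 1" using \<open>s \<subseteq> V\<close> \<open>card s = l + 1\<close> card_compl jl by simp
      ultimately show "V - s \<in> ?N" by simp
    qed
  qed (use KV in \<open>auto simp: faces_def\<close>)
  then have "card (faces K l) = card ?N" by (simp add: bij_betw_same_card)
  moreover have "{s. s \<subseteq> V \<and> card s = j + 1} = faces K j \<union> ?N"
    using KV by (auto simp: faces_def)
  moreover have "card (faces K j \<union> ?N) = card (faces K j) + card ?N"
    using fV KV by (intro card_Un_disjoint) (auto simp: faces_def intro: finite_subset[of _ "Pow V"])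
  ultimately show ?thesis using n_subsets[OF fV, of "j + 1"] by simp
qed

theorem proposition6p2:
  fixes V :: "'a set" and K :: "'a set set"
  assumes "simplicial_complex_on V K"
    and "card V = 15"
    and "F2_homology_manifold 8 K"
    and "complementarity V K"
  shows "card (faces K 8) = 490"
proof -
  have K: "finite_complex K"
    using assms(1) by (rule simplicial_complex_on_imp_finite_complex)
  have "card (faces K 5) + card (faces K 8) = 15 choose 6"
    using card_faces_complementary[OF assms(1,4)] assms(2) by simp
  moreover have "card (faces K 6) + card (faces K 7) = 15 choose 7"
    using card_faces_complementary[OF assms(1,4)] assms(2) by simp
  moreover have "9 * int (card (faces K 8)) = 2 * int (card (faces K 7))"
    using manifold_face_number_relation[OF K assms(3), of 7] by (simp add: binomial_fact' fact_numeral)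
  moreover have "7 * int (card (faces K 6)) - 28 * int (card (faces K 7)) + 84 * int (card (faces K 8))
      = 2 * int (card (faces K 5))"
    using manifold_face_number_relation[OF K assms(3), of 5]
    by (simp add: numeral_2_eq_2 binomial_fact' fact_numeral)
  moreover have "(15::nat) choose 6 = 5005" "(15::nat) choose 7 = 6435"
    by (simp_all add: binomial_fact' fact_numeral)
  ultimately show ?thesis by linarith
qed

end
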